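(* Let $Q:\mathbb C\to\mathbb R$ be $[0,1]$-admissible. Then, pointwise on $\mathbb C$, $\lim_{\tau\to0^+}\check Q_\tau=\min Q$.
   Context: For $\tau\ge0$, $\check Q_\tau$ is the maximal subharmonic function $q\le Q$ on $\mathbb C$ with $q(z)\le\tau\log|z|^2+\mathcal O(1)$ as $|z|\to\infty$; $S^\star_{Q,\tau}=\{\check Q_\tau=Q\}$. For $\tau>0$, $S_{Q,\tau}$ is the support of the unique minimizer of $J(\mu)=\iint\log\frac1{|z-w|}d\mu(z)d\mu(w)+\int Q\,d\mu$ over compactly supported Borel measures of total mass $\tau$; $S_{Q,0}$ is the set of minimum points of $Q$. $Q$ is $\tau$-admissible ($\tau>0$) if $S_{Q,\tau}=S^\star_{Q,\tau}$, $Q$ is $C^2$, real-analytic and strictly subharmonic in a neighborhood of $S_{Q,\tau}$, $\liminf_{|z|\to\infty}Q(z)/\log|z|^2>\tau$, and $\partial S_{Q,\tau}$ is a smooth Jordan curve. $Q$ is $[0,1]$-admissible if it is $\tau$-admissible for all $\tau\in(0,1+\delta)$ for some $\delta>0$ and $S_{Q,0}$ is a single point. *)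

theory Defs
  imports "HOL-Analysis.Analysis"
begin

definition ereal_int :: "'a measure \<Rightarrow> ('a \<Rightarrow> ereal) \<Rightarrow> ereal" where
  "ereal_int M f =
     enn2ereal (\<integral>\<^sup>+ x. e2ennreal (f x) \<partial>M) - enn2ereal (\<integral>\<^sup>+ x. e2ennreal (- f x) \<partial>M)"

definition usc :: "(complex \<Rightarrow> ereal) \<Rightarrow> bool" where
  "usc q \<longleftrightarrow> (\<forall>c. open {z. q z < c})"

definition circle_mean :: "(complex \<Rightarrow> ereal) \<Rightarrow> complex \<Rightarrow> real \<Rightarrow> ereal" where
  "circle_mean q a r =
     ereal_int (restrict_space lborel {0..2*pi}) (\<lambda>t. q (a + complex_of_real r * cis t))
       / ereal (2 * pi)"

definition subharmonic :: "(complex \<Rightarrow> ereal) \<Rightarrow> bool" where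
  "subharmonic q \<longleftrightarrow> (\<forall>z. q z \<noteq> \<infinity>) \<and> usc q \<and>
     (\<forall>a r. 0 < r \<longrightarrow> q a \<le> circle_mean q a r)"

definition log_growth :: "(complex \<Rightarrow> ereal) \<Rightarrow> real \<Rightarrow> bool" where
  "log_growth q tau \<longleftrightarrow>
     (\<exists>C R. \<forall>w. R \<le> cmod w \<longrightarrow> q w \<le> ereal (tau * ln ((cmod w)\<^sup>2) + C))"

definition checkQ :: "(complex \<Rightarrow> real) \<Rightarrow> real \<Rightarrow> complex \<Rightarrow> ereal" where
  "checkQ Q tau z =
     (SUP q \<in> {q. subharmonic q \<and> (\<forall>w. q w \<le> ereal (Q w)) \<and> log_growth q tau}. q z)"

definition Sstar :: "(complex \<Rightarrow> real) \<Rightarrow> real \<Rightarrow> complex set" where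
  "Sstar Q tau = {z. checkQ Q tau z = ereal (Q z)}"

definition msupp :: "complex measure \<Rightarrow> complex set" where
  "msupp \<mu> = {z. \<forall>e>0. emeasure \<mu> (ball z e) > 0}"

definition admissible_measures :: "real \<Rightarrow> complex measure set" where
  "admissible_measures tau =
     {\<mu>. sets \<mu> = sets borel \<and> emeasure \<mu> UNIV = ennreal tau \<and> compact (msupp \<mu>)}"

definition log_kernel :: "complex \<Rightarrow> complex \<Rightarrow> ereal" where
  "log_kernel z w = (if z = w then \<infinity> else ereal (- ln (cmod (z - w))))"

definition log_energy :: "complex measure \<Rightarrow> ereal" where
  "log_energy \<mu> =
     enn2ereal (\<integral>\<^sup>+ z. \<integral>\<^sup>+ w. e2ennreal (log_kernel z w) \<partial>\<mu> \<partial>\<mu>)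
   - enn2ereal (\<integral>\<^sup>+ z. \<integral>\<^sup>+ w. e2ennreal (- log_kernel z w) \<partial>\<mu> \<partial>\<mu>)"

definition Jfun :: "(complex \<Rightarrow> real) \<Rightarrow> complex measure \<Rightarrow> ereal" where
  "Jfun Q \<mu> = log_energy \<mu> + ereal_int \<mu> (\<lambda>z. ereal (Q z))"

definition is_minimizer :: "(complex \<Rightarrow> real) \<Rightarrow> real \<Rightarrow> complex measure \<Rightarrow> bool" where
  "is_minimizer Q tau \<mu> \<longleftrightarrow> \<mu> \<in> admissible_measures tau \<and>
     (\<forall>\<nu>\<in>admissible_measures tau. Jfun Q \<mu> \<le> Jfun Q \<nu>)"

definition S_Q :: "(complex \<Rightarrow> real) \<Rightarrow> real \<Rightarrow> complex set" where
  "S_Q Q tau = (if tau = 0 then {z. \<forall>w. Q z \<le> Q w}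
                else msupp (THE \<mu>. is_minimizer Q tau \<mu>))"

definition pdir :: "complex \<Rightarrow> (complex \<Rightarrow> real) \<Rightarrow> complex \<Rightarrow> real" where
  "pdir v f z = deriv (\<lambda>t::real. f (z + complex_of_real t * v)) 0"

definition C2_on :: "(complex \<Rightarrow> real) \<Rightarrow> complex set \<Rightarrow> bool" where
  "C2_on f U \<longleftrightarrow> open U \<and> continuous_on U f \<and>
     (\<forall>v\<in>{1, \<i>}.
        (\<forall>z\<in>U. (\<lambda>t::real. f (z + complex_of_real t * v)) differentiable (at 0)) \<and>
        continuous_on U (pdir v f) \<and>
        (\<forall>w\<in>{1, \<i>}.
           (\<forall>z\<in>U. (\<lambda>t::real. pdir v f (z + complex_of_real t * w)) differentiable (at 0)) \<and>
           continuous_on U (pdir w (pdir v f))))"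

definition laplacian :: "(complex \<Rightarrow> real) \<Rightarrow> complex \<Rightarrow> real" where
  "laplacian f z = pdir 1 (pdir 1 f) z + pdir \<i> (pdir \<i> f) z"

definition real_analytic_on :: "(complex \<Rightarrow> real) \<Rightarrow> complex set \<Rightarrow> bool" where
  "real_analytic_on f U \<longleftrightarrow> (\<forall>p\<in>U. \<exists>r>0. \<exists>a :: nat \<Rightarrow> nat \<Rightarrow> real. \<forall>z\<in>ball p r.
      (\<lambda>(j,k). \<bar>a j k * (Re (z - p)) ^ j * (Im (z - p)) ^ k\<bar>) summable_on UNIV \<and>
      ((\<lambda>(j,k). a j k * (Re (z - p)) ^ j * (Im (z - p)) ^ k) has_sum f z) UNIV)"

definition smooth_jordan_curve :: "complex set \<Rightarrow> bool" where
  "smooth_jordan_curve C \<longleftrightarrow> (\<exists>\<gamma> :: real \<Rightarrow> complex.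
      (\<forall>t. \<gamma> (t + 1) = \<gamma> t) \<and>
      (\<forall>n t. (((\<lambda>g t. vector_derivative g (at t)) ^^ n) \<gamma>) differentiable (at t)) \<and>
      (\<forall>t. vector_derivative \<gamma> (at t) \<noteq> 0) \<and>
      inj_on \<gamma> {0..<1} \<and> C = \<gamma> ` {0..1})"

definition tau_admissible :: "(complex \<Rightarrow> real) \<Rightarrow> real \<Rightarrow> bool" where
  "tau_admissible Q tau \<longleftrightarrow> 0 < tau \<and>
     (\<exists>!\<mu>. is_minimizer Q tau \<mu>) \<and>
     S_Q Q tau = Sstar Q tau \<and>
     (\<exists>U. open U \<and> S_Q Q tau \<subseteq> U \<and> C2_on Q U \<and> real_analytic_on Q U \<and>
          (\<forall>z\<in>U. laplacian Q z > 0)) \<and>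
     Liminf at_infinity (\<lambda>z. ereal (Q z / ln ((cmod z)\<^sup>2))) > ereal tau \<and>
     smooth_jordan_curve (frontier (S_Q Q tau))"

definition unit_admissible :: "(complex \<Rightarrow> real) \<Rightarrow> bool" where
  "unit_admissible Q \<longleftrightarrow>
     (\<exists>\<delta>>0. \<forall>tau\<in>{0<..<1+\<delta>}. tau_admissible Q tau) \<and> (\<exists>z0. S_Q Q 0 = {z0})"

end

theory Submission
  imports Defs "HOL-Complex_Analysis.Cauchy_Integral_Formula"
begin

(* The constant min Q is a competitor for every tau >= 0, which gives min Q <= checkQ Q tau.
   Conversely, let z0 be the minimum point of Q.  The constant competitor touches Q at z0, so z0
   lies in the droplet S_{Q,1/2}; hence Q is continuous at z0 and Q <= M := min Q + eps on a disc
   D(z0,r).  A competitor q of growth tau log|z|^2 is compared on large annuli r <= |z-z0| <= R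
   with M + 4 tau log(|z-z0|/r): after adding delta |z-z0|^2 the comparison function is strictly
   subharmonic, so by the sub-mean value property the maximum of q plus it, which exists since q
   is upper semicontinuous, lies on the boundary circles.  Letting delta -> 0 gives
   checkQ Q tau z <= M + 4 tau log+(|z-z0|/r), which tends to M as tau -> 0. *)

lemma ereal_int_mono:
  assumes "\<And>t. f t \<le> g t"
  shows "ereal_int M f \<le> ereal_int M g"
proof -
  have "(\<integral>\<^sup>+ x. e2ennreal (f x) \<partial>M) \<le> (\<integral>\<^sup>+ x. e2ennreal (g x) \<partial>M)"
    by (intro nn_integral_mono e2ennreal_mono assms)
  moreover have "(\<integral>\<^sup>+ x. e2ennreal (- g x) \<partial>M) \<le> (\<integral>\<^sup>+ x. e2ennreal (- f x) \<partial>M)"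
    by (intro nn_integral_mono e2ennreal_mono) (simp add: assms)
  ultimately show ?thesis
    unfolding ereal_int_def
    by (intro ereal_minus_mono) (simp_all add: less_eq_ennreal.rep_eq[symmetric])
qed

lemma nn_integral_interval_pos_part:
  fixes G :: "real \<Rightarrow> real"
  assumes "continuous_on {a..b} G"
  shows "(\<integral>\<^sup>+ t. e2ennreal (ereal (G t)) \<partial>restrict_space lborel {a..b})
       = ennreal (integral {a..b} (\<lambda>t. max 0 (G t)))"
proof -
  have "(\<integral>\<^sup>+ t. e2ennreal (ereal (G t)) \<partial>restrict_space lborel {a..b})
      = (\<integral>\<^sup>+ t. ennreal (max 0 (G t)) * indicator {a..b} t \<partial>lborel)"
    by (subst nn_integral_restrict_space) (auto simp: ennreal_max_0 intro!: nn_integral_cong)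
  also have "\<dots> = ennreal (integral {a..b} (\<lambda>t. max 0 (G t)))"
  proof (rule nn_integral_has_integral_lebesgue')
    have "(\<lambda>t. max 0 (G t)) integrable_on {a..b}"
      by (intro integrable_continuous_interval continuous_intros assms)
    then show "((\<lambda>t. max 0 (G t)) has_integral integral {a..b} (\<lambda>t. max 0 (G t))) {a..b}"
      by (rule integrable_integral)
  qed auto
  finally show ?thesis .
qed

lemma ereal_int_continuous:
  fixes G :: "real \<Rightarrow> real"
  assumes cG: "continuous_on {a..b} G"
  shows "ereal_int (restrict_space lborel {a..b}) (\<lambda>t. ereal (G t)) = ereal (integral {a..b} G)"
proof -
  have cG': "continuous_on {a..b} (\<lambda>t. - G t)"
    using cG by (intro continuous_intros)
  have int: "(\<lambda>t. max 0 (G t)) integrable_on {a..b}" "(\<lambda>t. max 0 (- G t)) integrable_on {a..b}"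
    by (intro integrable_continuous_interval continuous_intros cG)+
  have "integral {a..b} (\<lambda>t. max 0 (G t)) - integral {a..b} (\<lambda>t. max 0 (- G t))
      = integral {a..b} (\<lambda>t. max 0 (G t) - max 0 (- G t))"
    by (rule integral_diff[symmetric]) (use int in auto)
  also have "\<dots> = integral {a..b} G"
    by (rule integral_cong) auto
  finally show ?thesis
    unfolding ereal_int_def
    using nn_integral_interval_pos_part[OF cG] nn_integral_interval_pos_part[OF cG']
      integral_nonneg[OF int(1)] integral_nonneg[OF int(2)]
    by simp
qed

lemma holomorphic_mean_value_circle:
  fixes f :: "complex \<Rightarrow> complex" and \<rho> R :: real
  assumes hol: "f holomorphic_on ball b R" and \<rho>: "0 < \<rho>" "\<rho> < R"
  shows "((\<lambda>t. f (b + \<rho> * cis t)) has_integral (2 * pi * f b)) {0..2*pi}"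
proof -
  have "((\<lambda>u. f u / (u - b)) has_contour_integral (2 * of_real pi * \<i> * f b)) (circlepath b \<rho>)"
  proof (rule Cauchy_integral_circlepath)
    show "continuous_on (cball b \<rho>) f"
      using holomorphic_on_imp_continuous_on[OF hol] by (rule continuous_on_subset) (use \<rho> in auto)
    show "f holomorphic_on ball b \<rho>"
      using hol by (rule holomorphic_on_subset) (use \<rho> in auto)
  qed (use \<rho> in auto)
  then have "((\<lambda>t. f (b + \<rho> * cis t) / (\<rho> * cis t) * \<rho> * \<i> * cis t) has_integral (2 * pi * \<i> * f b)) {0..2*pi}"
    by (simp add: circlepath_def has_contour_integral_part_circlepath_iff)
  moreover have "f (b + \<rho> * cis t) / (\<rho> * cis t) * \<rho> * \<i> * cis t = \<i> * f (b + \<rho> * cis t)" for t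
    using \<rho> by (simp add: field_simps)
  ultimately have "((\<lambda>t. \<i> * f (b + \<rho> * cis t)) has_integral (\<i> * (2 * pi * f b))) {0..2*pi}"
    by (simp add: algebra_simps)
  then show ?thesis
    by (simp add: has_integral_mult_right_iff)
qed

lemma has_integral_ln_norm_circle:
  fixes b :: complex and \<rho> :: real
  assumes \<rho>: "0 < \<rho>" "\<rho> < cmod b"
  shows "((\<lambda>t. ln (cmod (b + \<rho> * cis t))) has_integral (2 * pi * ln (cmod b))) {0..2*pi}"
proof -
  have b: "b \<noteq> 0" using \<rho> by auto
  have "u / b \<notin> \<real>\<^sub>\<le>\<^sub>0" if "u \<in> ball b (cmod b)" for u
  proof -
    have "u / b - 1 = (u - b) / b"
      using b by (simp add: field_simps)
    then have "cmod (u / b - 1) = cmod (u - b) / cmod b"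
      by (simp add: norm_divide)
    also have "\<dots> < 1"
      using that b by (simp add: dist_norm norm_minus_commute)
    finally have "Re (u / b) > 0"
      using abs_Re_le_cmod[of "u / b - 1"] by auto
    then show ?thesis
      by (auto simp: complex_nonpos_Reals_iff)
  qed
  then have "(\<lambda>u. Ln (u / b)) holomorphic_on ball b (cmod b)"
    by (intro holomorphic_intros) auto
  from has_integral_Re[OF holomorphic_mean_value_circle[OF this \<rho>]]
  have "((\<lambda>t. Re (Ln ((b + \<rho> * cis t) / b))) has_integral 0) {0..2*pi}"
    using b by simp
  then have "((\<lambda>t. ln (cmod (b + \<rho> * cis t)) - ln (cmod b)) has_integral 0) {0..2*pi}"
  proof (rule has_integral_eq[rotated])
    fix t
    have "b + \<rho> * cis t \<noteq> 0"
      using \<rho> norm_triangle_ineq2[of b "- \<rho> * cis t"] by (auto simp: norm_mult)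
    then show "Re (Ln ((b + \<rho> * cis t) / b)) = ln (cmod (b + \<rho> * cis t)) - ln (cmod b)"
      using b by (simp add: norm_divide ln_div)
  qed
  from has_integral_add[OF this has_integral_const_real[of "ln (cmod b)" 0 "2*pi"]]
  show ?thesis by simp
qed

lemma has_integral_norm_square_circle:
  fixes b :: complex and \<rho> :: real
  assumes \<rho>: "0 < \<rho>"
  shows "((\<lambda>t. (cmod (b + \<rho> * cis t))\<^sup>2) has_integral (2 * pi * ((cmod b)\<^sup>2 + \<rho>\<^sup>2))) {0..2*pi}"
proof -
  have square: "(cmod (b + x))\<^sup>2 = (cmod b)\<^sup>2 + (cmod x)\<^sup>2 + 2 * Re (cnj b * x)" for x
    unfolding cmod_power2 by (simp add: power2_eq_square algebra_simps)
  have "(\<lambda>u. 2 * cnj b * (u - b)) holomorphic_on ball b (\<rho> + 1)"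
    by (intro holomorphic_intros)
  from has_integral_Re[OF holomorphic_mean_value_circle[OF this \<rho>]]
  have "((\<lambda>t. 2 * Re (cnj b * (\<rho> * cis t))) has_integral 0) {0..2*pi}"
    by (simp add: mult.assoc)
  from has_integral_add[OF has_integral_const_real[of "(cmod b)\<^sup>2 + \<rho>\<^sup>2" 0 "2*pi"] this]
  show ?thesis
    using \<rho> by (simp add: square norm_mult)
qed

lemma ereal_add_real_less_iff:
  fixes x c :: ereal and y :: real
  shows "x + ereal y < c \<longleftrightarrow> (\<exists>m. x < ereal m \<and> ereal y < c - ereal m)"
proof
  assume "x + ereal y < c"
  then have "x < c - ereal y"
    by (simp add: ereal_less_minus)
  then obtain m where "x < ereal m" "ereal m < c - ereal y"
    using ereal_dense2 by blast
  then show "\<exists>m. x < ereal m \<and> ereal y < c - ereal m"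
    by (cases c) auto
next
  assume "\<exists>m. x < ereal m \<and> ereal y < c - ereal m"
  then obtain m where "x < ereal m" "ereal y < c - ereal m"
    by blast
  then show "x + ereal y < c"
    by (cases x; cases c) auto
qed

lemma openin_usc_add_continuous:
  fixes q :: "complex \<Rightarrow> ereal"
  assumes usc: "usc q" and \<psi>: "continuous_on A \<psi>"
  shows "openin (top_of_set A) {w \<in> A. q w + ereal (\<psi> w) < c}"
proof -
  have "{w \<in> A. q w + ereal (\<psi> w) < c} =
      (\<Union>m. A \<inter> {w. q w < ereal m} \<inter> (A \<inter> (\<lambda>w. ereal (\<psi> w)) -` {..< c - ereal m}))"
    by (auto simp: ereal_add_real_less_iff)
  moreover have "openin (top_of_set A) (A \<inter> {w. q w < ereal m} \<inter> (A \<inter> (\<lambda>w. ereal (\<psi> w)) -` {..< c - ereal m}))" for m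
    using usc unfolding usc_def
    by (intro openin_Int openin_open_Int continuous_openin_preimage_gen continuous_intros \<psi>) auto
  ultimately show ?thesis
    by (auto intro: openin_Union)
qed

lemma compact_usc_attains_max:
  fixes v :: "'a::t2_space \<Rightarrow> ereal"
  assumes A: "compact A" "A \<noteq> {}" and usc: "\<And>c. openin (top_of_set A) {w \<in> A. v w < c}"
  obtains a where "a \<in> A" "\<And>w. w \<in> A \<Longrightarrow> v w \<le> v a"
proof -
  define S where "S = (SUP w\<in>A. v w)"
  have "A \<inter> (\<Inter>c\<in>{..<S}. {w \<in> A. c \<le> v w}) \<noteq> {}"
  proof (rule compact_imp_fip_image[OF A(1)])
    fix c
    have "closedin (top_of_set A) (A - {w \<in> A. v w < c})"
      using usc by (intro closedin_diff) (simp_all add: closedin_subtopology_refl)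
    moreover have "A - {w \<in> A. v w < c} = {w \<in> A. c \<le> v w}"
      by auto
    ultimately show "closed {w \<in> A. c \<le> v w}"
      using closedin_closed_trans compact_imp_closed[OF A(1)] by metis
  next
    fix C assume C: "finite C" "C \<subseteq> {..<S}"
    show "A \<inter> (\<Inter>c\<in>C. {w \<in> A. c \<le> v w}) \<noteq> {}"
    proof (cases "C = {}")
      case True
      then show ?thesis using A(2) by simp
    next
      case False
      then have "Max C < S"
        using C by auto
      then obtain w where "w \<in> A" "Max C < v w"
        unfolding S_def less_SUP_iff by blast
      then have "w \<in> A \<inter> (\<Inter>c\<in>C. {w \<in> A. c \<le> v w})"
        using C by (auto intro: order_trans[OF Max_ge less_imp_le])
      then show ?thesis by blast
    qed
  qed
  then obtain a where a: "a \<in> A \<inter> (\<Inter>c\<in>{..<S}. {w \<in> A. c \<le> v w})"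
    by blast
  have "S \<le> v a"
  proof (rule dense_le)
    fix c assume "c < S"
    then show "c \<le> v a"
      using a by blast
  qed
  moreover have "v w \<le> S" if "w \<in> A" for w
    unfolding S_def using that by (rule SUP_upper)
  moreover have "a \<in> A"
    using a by blast
  ultimately show ?thesis
    using that order_trans by blast
qed

lemma isCont_le_on_cball:
  fixes f :: "'a::metric_space \<Rightarrow> real"
  assumes cont: "isCont f x" and M: "f x < M"
  obtains r where "0 < r" "\<And>y. dist y x \<le> r \<Longrightarrow> f y \<le> M"
proof -
  obtain d where d: "0 < d" "\<And>y. dist y x < d \<Longrightarrow> dist (f y) (f x) < M - f x"
    using cont M unfolding continuous_at_eps_delta by (meson diff_gt_0_iff_gt)
  show ?thesis
  proof (rule that[of "d / 2"])
    fix y assume "dist y x \<le> d / 2"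
    then have "dist (f y) (f x) < M - f x"
      using d by simp
    then show "f y \<le> M"
      by (simp add: dist_real_def)
  qed (use d in simp)
qed

lemma circle_mean_le_integral:
  fixes G :: "real \<Rightarrow> real"
  assumes G: "continuous_on {0..2*pi} G" and le: "\<And>t. q (a + r * cis t) \<le> ereal (G t)"
  shows "circle_mean q a r \<le> ereal (integral {0..2*pi} G / (2*pi))"
proof -
  have "ereal_int (restrict_space lborel {0..2*pi}) (\<lambda>t. q (a + r * cis t))
      \<le> ereal_int (restrict_space lborel {0..2*pi}) (\<lambda>t. ereal (G t))"
    by (rule ereal_int_mono) (rule le)
  also have "\<dots> = ereal (integral {0..2*pi} G)"
    by (rule ereal_int_continuous[OF G])
  finally have "circle_mean q a r \<le> ereal (integral {0..2*pi} G) / ereal (2*pi)"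
    unfolding circle_mean_def by (rule ereal_divide_right_mono) simp
  then show ?thesis
    by simp
qed

lemma subharmonic_const: "subharmonic (\<lambda>_. ereal c)"
proof -
  have "circle_mean (\<lambda>_. ereal c) a r = ereal c" for a r
    using ereal_int_continuous[of 0 "2*pi" "\<lambda>_. c"] by (simp add: circle_mean_def)
  moreover have "open {z::complex. ereal c < c'}" for c'
    by (cases "ereal c < c'") auto
  ultimately show ?thesis
    by (simp add: subharmonic_def usc_def)
qed

definition log_barrier :: "complex \<Rightarrow> real \<Rightarrow> real \<Rightarrow> complex \<Rightarrow> real" where
  "log_barrier z0 \<delta> \<kappa> w = \<delta> * (cmod (w - z0))\<^sup>2 - \<kappa> * ln (cmod (w - z0))"

lemma continuous_on_log_barrier:
  assumes "z0 \<notin> A"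
  shows "continuous_on A (log_barrier z0 \<delta> \<kappa>)"
  unfolding log_barrier_def using assms by (intro continuous_intros) auto

lemma has_integral_log_barrier_circle:
  assumes \<rho>: "0 < \<rho>" "\<rho> < cmod (a - z0)"
  shows "((\<lambda>t. log_barrier z0 \<delta> \<kappa> (a + \<rho> * cis t))
           has_integral (2 * pi * (log_barrier z0 \<delta> \<kappa> a + \<delta> * \<rho>\<^sup>2))) {0..2*pi}"
proof -
  have sq: "((\<lambda>t. \<delta> * (cmod ((a - z0) + \<rho> * cis t))\<^sup>2)
             has_integral (\<delta> * (2 * pi * ((cmod (a - z0))\<^sup>2 + \<rho>\<^sup>2)))) {0..2*pi}"
    by (rule has_integral_mult_right) (rule has_integral_norm_square_circle[OF \<rho>(1)])
  have ln: "((\<lambda>t. \<kappa> * ln (cmod ((a - z0) + \<rho> * cis t)))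
             has_integral (\<kappa> * (2 * pi * ln (cmod (a - z0))))) {0..2*pi}"
    by (rule has_integral_mult_right) (rule has_integral_ln_norm_circle[OF \<rho>])
  show ?thesis
    using has_integral_diff[OF sq ln] by (simp add: log_barrier_def algebra_simps)
qed

lemma subharmonic_add_log_barrier_circle_max:
  assumes sh: "subharmonic q" and \<delta>: "0 < \<delta>" and \<rho>: "0 < \<rho>" "\<rho> < cmod (a - z0)"
    and centre_max: "\<And>t. q (a + \<rho> * cis t) + ereal (log_barrier z0 \<delta> \<kappa> (a + \<rho> * cis t))
                   \<le> q a + ereal (log_barrier z0 \<delta> \<kappa> a)"
  shows "q a = -\<infinity>"
proof (rule ccontr)
  assume "q a \<noteq> -\<infinity>"
  moreover have "q a \<noteq> \<infinity>"
    using sh by (simp add: subharmonic_def)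
  ultimately obtain m where m: "q a = ereal m"
    by (cases "q a") auto
  define \<beta> where "\<beta> = log_barrier z0 \<delta> \<kappa>"
  define G where "G = (\<lambda>t. m + \<beta> a - \<beta> (a + \<rho> * cis t))"
  have le: "q (a + \<rho> * cis t) \<le> ereal (G t)" for t
    using centre_max[of t] by (cases "q (a + \<rho> * cis t)") (auto simp: m G_def \<beta>_def)
  have "z0 \<notin> range (\<lambda>t. a + \<rho> * cis t)"
    using \<rho> by (auto simp: norm_mult)
  then have G: "continuous_on {0..2*pi} G"
    unfolding G_def \<beta>_def
    by (intro continuous_intros continuous_on_compose2[OF continuous_on_log_barrier]) auto
  moreover have "(G has_integral (2 * pi * (m - \<delta> * \<rho>\<^sup>2))) {0..2*pi}"
    using has_integral_diff[OF has_integral_const_real[of "m + \<beta> a" 0 "2*pi"]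
                               has_integral_log_barrier_circle[OF \<rho>, of \<delta> \<kappa>]]
    by (simp add: G_def \<beta>_def algebra_simps)
  ultimately have "circle_mean q a \<rho> \<le> ereal (m - \<delta> * \<rho>\<^sup>2)"
    using circle_mean_le_integral[of G q a \<rho>, OF G le] by (simp add: integral_unique)
  moreover have "q a \<le> circle_mean q a \<rho>"
    using sh \<rho> by (simp add: subharmonic_def)
  ultimately have "m \<le> m - \<delta> * \<rho>\<^sup>2"
    using m by (metis ereal_less_eq(3) order_trans)
  moreover have "0 < \<delta> * \<rho>\<^sup>2"
    using \<delta> \<rho> by simp
  ultimately show False
    by simp
qed

lemma subharmonic_add_log_barrier_annulus_bound:
  assumes sh: "subharmonic q" and \<delta>: "0 < \<delta>" and r: "0 < r"
    and bd: "\<And>w. cmod (w - z0) = r \<or> cmod (w - z0) = R \<Longrightarrow>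
               q w + ereal (log_barrier z0 \<delta> \<kappa> w) \<le> ereal B"
    and z: "r \<le> cmod (z - z0)" "cmod (z - z0) \<le> R"
  shows "q z + ereal (log_barrier z0 \<delta> \<kappa> z) \<le> ereal B"
proof -
  define v where "v w = q w + ereal (log_barrier z0 \<delta> \<kappa> w)" for w
  define A where "A = cball z0 R - ball z0 r"
  have A: "w \<in> A \<longleftrightarrow> r \<le> cmod (w - z0) \<and> cmod (w - z0) \<le> R" for w
    by (auto simp: A_def dist_norm norm_minus_commute)
  have "z0 \<notin> A"
    using r A by auto
  then have "openin (top_of_set A) {w \<in> A. v w < c}" for c
    using sh unfolding v_def subharmonic_def
    by (intro openin_usc_add_continuous continuous_on_log_barrier) auto
  moreover have "compact A"
    unfolding A_def by (intro compact_diff) auto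
  moreover have "z \<in> A"
    using z by (simp add: A)
  ultimately obtain a where a: "a \<in> A" and a_max: "\<And>w. w \<in> A \<Longrightarrow> v w \<le> v a"
    using compact_usc_attains_max[of A v] by blast
  have "v a \<le> ereal B"
  proof (cases "cmod (a - z0) = r \<or> cmod (a - z0) = R")
    case True
    then show ?thesis
      using bd by (simp add: v_def)
  next
    case False
    define \<rho> where "\<rho> = min (cmod (a - z0) - r) (R - cmod (a - z0))"
    have \<rho>: "0 < \<rho>" "\<rho> < cmod (a - z0)"
      using False a r by (auto simp: A \<rho>_def)
    have "a + \<rho> * cis t \<in> A" for t
    proof -
      have "\<bar>cmod (a + \<rho> * cis t - z0) - cmod (a - z0)\<bar> \<le> \<rho>"
        using norm_triangle_ineq3[of "a + \<rho> * cis t - z0" "a - z0"] \<rho> by (simp add: norm_mult)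
      then show ?thesis
        unfolding A \<rho>_def by (auto simp: abs_le_iff)
    qed
    then have "q a = -\<infinity>"
      using subharmonic_add_log_barrier_circle_max[OF sh \<delta> \<rho>] a_max a by (auto simp: v_def)
    then show ?thesis
      by (simp add: v_def)
  qed
  then show ?thesis
    using a_max[OF \<open>z \<in> A\<close>] by (simp add: v_def)
qed

lemma log_growth_circle_bound:
  assumes lg: "log_growth q tau" and tau: "0 < tau"
  obtains R where "R0 < R" "\<And>w. cmod (w - z0) = R \<Longrightarrow> q w \<le> ereal (K + 4 * tau * ln R)"
proof -
  obtain C R1 where C: "\<And>w. R1 \<le> cmod w \<Longrightarrow> q w \<le> ereal (tau * ln ((cmod w)\<^sup>2) + C)"
    using lg unfolding log_growth_def by blast
  \<comment> \<open>The slack between 4 tau and the growth rate 2 tau of q absorbs the constant C.\<close>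
  define R where "R = max (max (R0 + 1) (2 * cmod z0 + \<bar>R1\<bar> + 1)) (exp ((2 * tau * ln 2 + C - K) / (2 * tau)))"
  have R: "R0 < R" "2 * cmod z0 + \<bar>R1\<bar> + 1 \<le> R" "2 * tau * ln 2 + C - K \<le> 2 * tau * ln R"
  proof -
    have "exp ((2 * tau * ln 2 + C - K) / (2 * tau)) \<le> R"
      by (simp add: R_def)
    then have "(2 * tau * ln 2 + C - K) / (2 * tau) \<le> ln R"
      by (metis exp_gt_zero exp_le_cancel_iff exp_ln order_less_le_trans)
    then show "2 * tau * ln 2 + C - K \<le> 2 * tau * ln R"
      using tau by (simp add: divide_le_eq mult.commute)
  qed (auto simp: R_def)
  show ?thesis
  proof (rule that[OF R(1)])
    fix w assume w: "cmod (w - z0) = R"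
    have w_lower: "R - cmod z0 \<le> cmod w"
      using w norm_triangle_ineq4[of w z0] by simp
    have "cmod w \<le> cmod (w - z0) + cmod z0"
      using norm_triangle_ineq[of "w - z0" z0] by simp
    then have w_upper: "cmod w \<le> 2 * R"
      using w R(2) abs_ge_zero[of R1] norm_ge_zero[of z0] by linarith
    have "R1 \<le> cmod w" "0 < cmod w"
      using w_lower R(2) abs_ge_self[of R1] abs_ge_zero[of R1] norm_ge_zero[of z0] by linarith+
    have "ln (cmod w) \<le> ln (2 * R)"
      using w_upper \<open>0 < cmod w\<close> by (rule ln_mono)
    have "q w \<le> ereal (tau * ln ((cmod w)\<^sup>2) + C)"
      using C \<open>R1 \<le> cmod w\<close> by blast
    also have "tau * ln ((cmod w)\<^sup>2) + C \<le> 2 * tau * ln (2 * R) + C"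
      using \<open>ln (cmod w) \<le> ln (2 * R)\<close> \<open>0 < cmod w\<close> tau by (simp add: ln_realpow)
    also have "\<dots> \<le> K + 4 * tau * ln R"
    proof -
      have "0 < R"
        using \<open>0 < cmod w\<close> w_upper by linarith
      then show ?thesis
        using R(3) by (simp add: ln_mult algebra_simps)
    qed
    finally show "q w \<le> ereal (K + 4 * tau * ln R)"
      by simp
  qed
qed

lemma subharmonic_log_growth_bound:
  assumes sh: "subharmonic q" and lg: "log_growth q tau" and tau: "0 < tau" and r: "0 < r"
    and inner: "\<And>w. cmod (w - z0) \<le> r \<Longrightarrow> q w \<le> ereal M"
    and z: "r < cmod (z - z0)"
  shows "q z \<le> ereal (M + 4 * tau * (ln (cmod (z - z0)) - ln r))"
proof -
  define \<kappa> where "\<kappa> = 4 * tau"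
  obtain R where R: "cmod (z - z0) < R"
    and outer: "\<And>w. cmod (w - z0) = R \<Longrightarrow> q w \<le> ereal (M - \<kappa> * ln r + \<kappa> * ln R)"
    using log_growth_circle_bound[OF lg tau] unfolding \<kappa>_def by metis
  have "q z \<le> ereal (M + \<kappa> * (ln (cmod (z - z0)) - ln r)) + ereal e" if e: "0 < e" for e
  proof -
    define \<delta> where "\<delta> = e / R\<^sup>2"
    have \<delta>: "0 < \<delta>"
      using e z r R by (simp add: \<delta>_def)
    have "q w + ereal (log_barrier z0 \<delta> \<kappa> w) \<le> ereal (M + \<delta> * R\<^sup>2 - \<kappa> * ln r)"
      if "cmod (w - z0) = r \<or> cmod (w - z0) = R" for w
      using that
    proof
      assume w: "cmod (w - z0) = r"
      have "\<delta> * r\<^sup>2 \<le> \<delta> * R\<^sup>2"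
        using \<delta> r z R by (simp add: power_mono)
      then show ?thesis
        using inner[of w] w by (cases "q w") (auto simp: log_barrier_def)
    next
      assume "cmod (w - z0) = R"
      then show ?thesis
        using outer[of w] by (cases "q w") (auto simp: log_barrier_def)
    qed
    then have "q z + ereal (log_barrier z0 \<delta> \<kappa> z) \<le> ereal (M + \<delta> * R\<^sup>2 - \<kappa> * ln r)"
      by (rule subharmonic_add_log_barrier_annulus_bound[OF sh \<delta> r]) (use z R in auto)
    moreover have "\<delta> * R\<^sup>2 = e"
      using z r R by (simp add: \<delta>_def)
    moreover have "0 \<le> \<delta> * (cmod (z - z0))\<^sup>2"
      using \<delta> by simp
    ultimately show ?thesis
      by (cases "q z") (auto simp: log_barrier_def algebra_simps)
  qed
  then show ?thesis
    unfolding \<kappa>_def by (rule ereal_le_epsilon2)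
qed

lemma checkQ_le: "checkQ Q tau z \<le> ereal (Q z)"
  unfolding checkQ_def by (rule SUP_least) auto

lemma min_le_checkQ:
  assumes min: "\<And>w. Q z0 \<le> Q w" and tau: "0 \<le> tau"
  shows "ereal (Q z0) \<le> checkQ Q tau z"
proof -
  have "log_growth (\<lambda>_. ereal (Q z0)) tau"
    unfolding log_growth_def
  proof (intro exI allI impI)
    fix w :: complex assume "1 \<le> cmod w"
    then have "0 \<le> tau * ln ((cmod w)\<^sup>2)"
      using tau by (simp add: one_le_power)
    then show "ereal (Q z0) \<le> ereal (tau * ln ((cmod w)\<^sup>2) + Q z0)"
      by simp
  qed
  then have "(\<lambda>_. ereal (Q z0)) \<in> {q. subharmonic q \<and> (\<forall>w. q w \<le> ereal (Q w)) \<and> log_growth q tau}"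
    using subharmonic_const min by auto
  then show ?thesis
    unfolding checkQ_def by (rule SUP_upper2) simp
qed

lemma checkQ_le_log_bound:
  assumes tau: "0 < tau" and r: "0 < r" and M: "\<And>w. cmod (w - z0) \<le> r \<Longrightarrow> Q w \<le> M"
  shows "checkQ Q tau z \<le> ereal (M + 4 * tau * max 0 (ln (cmod (z - z0)) - ln r))"
proof (cases "cmod (z - z0) \<le> r")
  case True
  have "0 \<le> 4 * tau * max 0 (ln (cmod (z - z0)) - ln r)"
    using tau by simp
  then have "Q z \<le> M + 4 * tau * max 0 (ln (cmod (z - z0)) - ln r)"
    using M[OF True] by linarith
  then show ?thesis
    using checkQ_le[of Q tau z] by (metis ereal_less_eq(3) order_trans)
next
  case False
  then have z: "r < cmod (z - z0)"
    by simp
  have bound: "q z \<le> ereal (M + 4 * tau * max 0 (ln (cmod (z - z0)) - ln r))"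
    if sh: "subharmonic q" and le: "\<forall>w. q w \<le> ereal (Q w)" and lg: "log_growth q tau" for q
  proof -
    have inner: "q w \<le> ereal M" if "cmod (w - z0) \<le> r" for w
      using le M[OF that] order_trans[of "q w" "ereal (Q w)" "ereal M"] by simp
    have "q z \<le> ereal (M + 4 * tau * (ln (cmod (z - z0)) - ln r))"
      by (rule subharmonic_log_growth_bound[OF sh lg tau r inner z])
    also have "\<dots> \<le> ereal (M + 4 * tau * max 0 (ln (cmod (z - z0)) - ln r))"
      using tau by simp
    finally show ?thesis .
  qed
  show ?thesis
    unfolding checkQ_def by (rule SUP_least) (simp add: bound)
qed

lemma checkQ_tendsto_min:
  assumes min: "\<And>w. Q z0 \<le> Q w" and cont: "isCont Q z0"
  shows "((\<lambda>tau. checkQ Q tau z) \<longlongrightarrow> ereal (Q z0)) (at_right 0)"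
proof (rule order_tendstoI)
  fix a assume a: "a < ereal (Q z0)"
  show "\<forall>\<^sub>F tau in at_right 0. a < checkQ Q tau z"
    using eventually_at_right_less[of "0::real"]
  proof eventually_elim
    case (elim tau)
    then show ?case
      using a min_le_checkQ[of Q z0 tau z] min by (auto intro: less_le_trans)
  qed
next
  fix b assume "ereal (Q z0) < b"
  then obtain M where M: "ereal (Q z0) < ereal M" "ereal M < b"
    using ereal_dense2 by blast
  obtain r where r: "0 < r" "\<And>w. cmod (w - z0) \<le> r \<Longrightarrow> Q w \<le> M"
    using isCont_le_on_cball[OF cont, of M] M(1) by (auto simp: dist_norm)
  define L where "L = max 0 (ln (cmod (z - z0)) - ln r)"
  have "((\<lambda>tau. ereal (M + 4 * tau * L)) \<longlongrightarrow> ereal M) (at_right 0)"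
    by (intro tendsto_intros tendsto_eq_intros) auto
  then have "\<forall>\<^sub>F tau in at_right 0. ereal (M + 4 * tau * L) < b"
    using M(2) by (rule order_tendstoD)
  moreover have "\<forall>\<^sub>F tau in at_right 0. checkQ Q tau z \<le> ereal (M + 4 * tau * L)"
    using eventually_at_right_less[of "0::real"]
  proof eventually_elim
    case (elim tau)
    show ?case
      unfolding L_def by (rule checkQ_le_log_bound[OF elim r])
  qed
  ultimately show "\<forall>\<^sub>F tau in at_right 0. checkQ Q tau z < b"
    by eventually_elim (rule le_less_trans)
qed

lemma unit_admissible_continuous_min:
  assumes "unit_admissible Q"
  obtains z0 where "\<And>w. Q z0 \<le> Q w" "isCont Q z0"
proof -
  obtain \<delta> z0 where \<delta>: "0 < \<delta>" "\<And>tau. tau \<in> {0<..<1 + \<delta>} \<Longrightarrow> tau_admissible Q tau"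
    and z0: "S_Q Q 0 = {z0}"
    using assms unfolding unit_admissible_def by blast
  have min: "\<And>w. Q z0 \<le> Q w"
    using z0 unfolding S_Q_def by (auto simp: set_eq_iff)
  have "tau_admissible Q (1/2)"
    using \<delta> by simp
  then obtain U where U: "open U" "S_Q Q (1/2) \<subseteq> U" "C2_on Q U" and S: "S_Q Q (1/2) = Sstar Q (1/2)"
    unfolding tau_admissible_def by blast
  have "checkQ Q (1/2) z0 = ereal (Q z0)"
    using min_le_checkQ[of Q z0 "1/2" z0] checkQ_le[of Q "1/2" z0] min by simp
  then have "z0 \<in> U"
    using U(2) S unfolding Sstar_def by auto
  moreover have "continuous_on U Q"
    using U(3) unfolding C2_on_def by blast
  ultimately have "isCont Q z0"
    using U(1) by (simp add: continuous_on_eq_continuous_at)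
  with min show ?thesis
    using that by blast
qed

theorem lemma1:
  fixes Q :: "complex \<Rightarrow> real"
  assumes "unit_admissible Q"
  shows "\<forall>z. ((\<lambda>tau. checkQ Q tau z) \<longlongrightarrow> (INF w. ereal (Q w))) (at_right 0)"
proof
  fix z
  obtain z0 where min: "\<And>w. Q z0 \<le> Q w" and cont: "isCont Q z0"
    using unit_admissible_continuous_min[OF assms] by blast
  have "(INF w. ereal (Q w)) = ereal (Q z0)"
    by (rule antisym) (auto intro: INF_lower INF_greatest simp: min)
  then show "((\<lambda>tau. checkQ Q tau z) \<longlongrightarrow> (INF w. ereal (Q w))) (at_right 0)"
    using checkQ_tendsto_min[OF min cont] by simp
qed

end
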